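(* Let $k$ be a positive integer and $G_1,\dots,G_m$ finite subgraphs of $\mathsf{Path}_{\mathbb Z}$ with $G_1\cup\dots\cup G_m=\mathsf{Path}_k$, and let $g:=\mathrm{gap}(G_1,\dots,G_m)$. Then there exists a shift permutation $\sigma$ of $[m]$ such that \[\vec\lambda(G_{\sigma(1)},\dots,G_{\sigma(m)})\ge\frac{g-3\max\{\lambda(G_1),\dots,\lambda(G_m)\}}{4}\] and \[\vec\Delta(G_{\tilde\sigma_j(1)},\dots,G_{\tilde\sigma_j(m)})\ge\frac{k}{4g}\quad\text{for all }j\in[m].\]
   Context: Graphs are finite simple graphs without isolated vertices; $\emptyset$ is the empty graph. $\mathsf{Path}_{\mathbb Z}$ has vertex set $\mathbb Z$ and edges $\{i-1,i\}$; for integers $s<t$, $\mathsf{Path}_{s,t}$ has vertices $s,\dots,t$ and edges $\{i-1,i\}$, $s<i\le t$; $\mathsf{Path}_k=\mathsf{Path}_{0,k}$. $\Delta(G)$ = number of connected components; $\lambda(G)$ = maximum number of edges in a component ($0$ for $\emptyset$); $G\ominus F$ = union of components of $G$ sharing no vertex with $F$. $\vec\Delta(H_1,\dots,H_r)=\sum_l\Delta(H_l\ominus(H_1\cup\dots\cup H_{l-1}))$, $\vec\lambda(H_1,\dots,H_r)=\sum_l\lambda(H_l\ominus(H_1\cup\dots\cup H_{l-1}))$. Shift permutations: permutations $\sigma$ of $[m]$ with $\sigma(j)\ge j-1$ for all $j$. For $I\subseteq[m]$ with $m\in I$, $I=\{i_1<\dots<i_p\}$, $i_0:=0$, let $\sigma_I(j)=i_h$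 if $j=i_{h-1}+1$ for some $h$, and $\sigma_I(j)=j-1$ otherwise; every shift permutation is $\sigma_I$ for exactly one such $I$. For $\sigma=\sigma_I$ and $j\in[m]$, $\tilde\sigma_j:=\sigma_{\tilde I_j}$ with $\tilde I_j=I\cup[i_{h-1}]$ if $j=i_h\in I$ and $\tilde I_j=I\cup[j-1]$ if $j\notin I$. Gap: let $c=\vec\Delta(G_1,\dots,G_m)$ and $0\le s_1<t_1<\dots<s_c<t_c\le k$ the integers with $\bigcup_{j=1}^m\big(G_j\ominus(G_1\cup\dots\cup G_{j-1})\big)=\bigcup_{i=1}^c\mathsf{Path}_{s_i,t_i}$; $\mathrm{gap}(G_1,\dots,G_m):=\max_{y\in[0,k]}\min_{i}\big|\frac{s_i+t_i}{2}-y\big|$. *)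

theory Defs
  imports Complex_Main
begin

text \<open>A finite subgraph of Path_Z without isolated vertices is represented by the
set of its edges, where the edge {i-1,i} is encoded by the integer i.
Thus Path_{s,t} is encoded by {s+1..t} and Path_k by {1..k}.\<close>

type_synonym pgraph = "int set"

definition verts :: "pgraph \<Rightarrow> int set" where
  "verts G = {v. v \<in> G \<or> v + 1 \<in> G}"

definition comp :: "pgraph \<Rightarrow> int \<Rightarrow> pgraph" where
  "comp G i = {j. {min i j..max i j} \<subseteq> G}"

definition components :: "pgraph \<Rightarrow> pgraph set" where
  "components G = comp G ` G"

definition Delta :: "pgraph \<Rightarrow> nat" where
  "Delta G = card (components G)"

definition lam :: "pgraph \<Rightarrow> nat" where
  "lam G = (if G = {} then 0 else Max (card ` components G))"

definition ominus :: "pgraph \<Rightarrow> pgraph \<Rightarrow> pgraph" where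
  "ominus G F = \<Union> {C \<in> components G. verts C \<inter> verts F = {}}"

definition vec_parts :: "pgraph list \<Rightarrow> pgraph list" where
  "vec_parts Hs = map (\<lambda>l. ominus (Hs ! l) (\<Union> (set (take l Hs)))) [0..<length Hs]"

definition vecDelta :: "pgraph list \<Rightarrow> nat" where
  "vecDelta Hs = (\<Sum>H\<leftarrow>vec_parts Hs. Delta H)"

definition vecLambda :: "pgraph list \<Rightarrow> nat" where
  "vecLambda Hs = (\<Sum>H\<leftarrow>vec_parts Hs. lam H)"

text \<open>Midpoint (s+t)/2 of the path component Path_{s,t}, encoded by edges {s+1..t}.\<close>
definition midpoint :: "pgraph \<Rightarrow> real" where
  "midpoint C = (real_of_int (Min C - 1) + real_of_int (Max C)) / 2"

definition gap :: "nat \<Rightarrow> pgraph list \<Rightarrow> real" where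
  "gap k Hs = (let U = \<Union> (set (vec_parts Hs)) in
     (SUP y\<in>{0..real k}. Min ((\<lambda>C. \<bar>midpoint C - y\<bar>) ` components U)))"

text \<open>Shift permutation sigma_I for I = {i_1 < ... < i_p} with i_0 = 0.\<close>
definition idx :: "nat set \<Rightarrow> nat \<Rightarrow> nat" where
  "idx I h = (if h = 0 then 0 else sorted_list_of_set I ! (h - 1))"

definition sigmaI :: "nat set \<Rightarrow> nat \<Rightarrow> nat" where
  "sigmaI I j = (if \<exists>h\<in>{1..card I}. j = idx I (h - 1) + 1
     then idx I (THE h. h \<in> {1..card I} \<and> j = idx I (h - 1) + 1)
     else j - 1)"

definition tildeI :: "nat set \<Rightarrow> nat \<Rightarrow> nat set" where
  "tildeI I j = (if j \<in> I
     then I \<union> {1..idx I ((THE h. h \<in> {1..card I} \<and> j = idx I h) - 1)}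
     else I \<union> {1..j - 1})"

definition shift_perm :: "nat \<Rightarrow> (nat \<Rightarrow> nat) \<Rightarrow> bool" where
  "shift_perm m \<sigma> \<longleftrightarrow> bij_betw \<sigma> {1..m} {1..m} \<and> (\<forall>j\<in>{1..m}. j - 1 \<le> \<sigma> j)"

definition reorder :: "nat \<Rightarrow> (nat \<Rightarrow> pgraph) \<Rightarrow> (nat \<Rightarrow> nat) \<Rightarrow> pgraph list" where
  "reorder m G \<sigma> = map (\<lambda>j. G (\<sigma> j)) [1..<m+1]"

end

theory Submission
  imports Defs
begin

text \<open>
  Let \<open>P\<^sub>i = G\<^sub>i \<ominus> (G\<^sub>1 \<union> \<dots> \<union> G\<^sub>i\<^sub>-\<^sub>1)\<close> be the parts summed in the vector
  quantities of \<open>G\<^sub>1, \<dots>, G\<^sub>m\<close>, and let \<open>D\<close> be the total number of their components.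
  The \<open>P\<^sub>i\<close> are pairwise vertex-disjoint, so the components of their union are those of the
  \<open>P\<^sub>i\<close>; as every point of \<open>[0, k]\<close> lies within \<open>g\<close> of one of their midpoints,
  \<open>k \<le> 2 g D\<close>. Under \<open>\<sigma>\<^sub>I\<close> an index \<open>q \<in> I\<close> is preceded only by smaller indices, so for
  every \<open>I' \<supseteq> I\<close> the \<open>\<Delta>\<close>-sum of \<open>\<sigma>\<^sub>I\<^sub>'\<close> is at least the number of components of the
  \<open>P\<^sub>q\<close>, \<open>q \<in> I\<close>. It therefore reaches \<open>D / 2 \<ge> k / (4 g)\<close> as soon as the indices
  outside \<open>I\<close> carry at most half of \<open>D\<close>.

  For the \<open>\<lambda>\<close>-bound choose \<open>y\<close> almost \<open>g\<close> away from all those midpoints, start at the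
  component containing the edge at \<open>y\<close>, and repeatedly move to a component of the first
  earlier graph that meets the current one. The walk ends at a component of the union, so
  the components passed have total size at least \<open>g - \<Lambda>\<close>, \<open>\<Lambda>\<close> the largest \<open>\<lambda>(G\<^sub>i)\<close>.
  Choosing steps greedily by cost per size and keeping every other one yields steps of
  total size \<open>(g - 3 \<Lambda>) / 4\<close> whose index blocks carry at most half of \<open>D\<close>; removing these
  blocks from \<open>[m]\<close> makes the chosen components survive under \<open>\<sigma>\<^sub>I\<close>.
\<close>

section \<open>Components of subgraphs of the path\<close>

definition is_component :: "pgraph \<Rightarrow> pgraph \<Rightarrow> bool" where
  "is_component G C \<longleftrightarrow>
     (\<exists>l r. l \<le> r \<and> C = {l..r} \<and> {l..r} \<subseteq> G \<and> l - 1 \<notin> G \<and> r + 1 \<notin> G)"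

lemma comp_subset: "comp G i \<subseteq> G"
  unfolding comp_def by auto

lemma comp_self: "i \<in> G \<Longrightarrow> i \<in> comp G i"
  unfolding comp_def by auto

lemma comp_eq_interval:
  assumes "{l..r} \<subseteq> G" "l - 1 \<notin> G" "r + 1 \<notin> G" "i \<in> {l..r}"
  shows "comp G i = {l..r}"
proof
  show "{l..r} \<subseteq> comp G i"
  proof
    fix j assume "j \<in> {l..r}"
    then have "{min i j..max i j} \<subseteq> {l..r}" using assms(4) by auto
    then have "{min i j..max i j} \<subseteq> G" using assms(1) by (rule order_trans)
    then show "j \<in> comp G i" by (simp add: comp_def)
  qed
  show "comp G i \<subseteq> {l..r}"
  proof
    fix j assume "j \<in> comp G i"
    then have path: "{min i j..max i j} \<subseteq> G" by (simp add: comp_def)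
    show "j \<in> {l..r}"
    proof (rule ccontr)
      assume "j \<notin> {l..r}"
      then have "l - 1 \<in> {min i j..max i j} \<or> r + 1 \<in> {min i j..max i j}"
        using assms(4) by auto
      then show False using path assms(2,3) by blast
    qed
  qed
qed

lemma is_component_comp:
  assumes "finite G" "i \<in> G"
  shows "is_component G (comp G i)"
proof -
  let ?C = "comp G i"
  have fin: "finite ?C" using assms(1) comp_subset finite_subset by blast
  have iC: "i \<in> ?C" using assms(2) by (rule comp_self)
  define l where "l = Min ?C"
  define r where "r = Max ?C"
  have "?C \<noteq> {}" using iC by blast
  then have "l \<in> ?C" "r \<in> ?C" "l \<le> i" "i \<le> r"
    unfolding l_def r_def using fin iC by auto
  then have lr: "{l..i} \<subseteq> G" "{i..r} \<subseteq> G" by (auto simp: comp_def)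
  have sub: "{l..r} \<subseteq> G"
  proof
    fix x assume "x \<in> {l..r}"
    then show "x \<in> G" using lr by (cases "x \<le> i") auto
  qed
  have "l - 1 \<notin> G"
  proof
    assume "l - 1 \<in> G"
    moreover have "{min i (l - 1)..max i (l - 1)} = insert (l - 1) {l..i}"
      using \<open>l \<le> i\<close> by auto
    ultimately have "l - 1 \<in> ?C" using lr(1) by (simp add: comp_def)
    then have "Min ?C \<le> l - 1" by (rule Min_le[OF fin])
    then show False by (simp add: l_def)
  qed
  moreover have "r + 1 \<notin> G"
  proof
    assume "r + 1 \<in> G"
    moreover have "{min i (r + 1)..max i (r + 1)} = insert (r + 1) {i..r}"
      using \<open>i \<le> r\<close> by auto
    ultimately have "r + 1 \<in> ?C" using lr(2) by (simp add: comp_def)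
    then have "r + 1 \<le> Max ?C" by (rule Max_ge[OF fin])
    then show False by (simp add: r_def)
  qed
  ultimately have "?C = {l..r}"
    using sub \<open>l \<le> i\<close> \<open>i \<le> r\<close> by (intro comp_eq_interval) auto
  then show ?thesis
    unfolding is_component_def using sub \<open>l - 1 \<notin> G\<close> \<open>r + 1 \<notin> G\<close> \<open>l \<le> i\<close> \<open>i \<le> r\<close>
    by (intro exI[of _ l] exI[of _ r]) auto
qed

lemma components_iff:
  assumes "finite G"
  shows "C \<in> components G \<longleftrightarrow> is_component G C"
proof
  assume "C \<in> components G"
  then show "is_component G C"
    unfolding components_def using is_component_comp[OF assms] by blast
next
  assume "is_component G C"
  then obtain l r where "l \<le> r" "C = {l..r}" "{l..r} \<subseteq> G" "l - 1 \<notin> G" "r + 1 \<notin> G"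
    unfolding is_component_def by blast
  then show "C \<in> components G"
    unfolding components_def using comp_eq_interval[of l r G l] by (intro image_eqI[of _ _ l]) auto
qed

lemma component_interval:
  assumes "finite G" "C \<in> components G"
  obtains l r where "l \<le> r" "C = {l..r}"
  using assms unfolding components_iff[OF assms(1)] is_component_def by blast

lemma comp_eq_component:
  assumes "finite G" "C \<in> components G" "i \<in> C"
  shows "comp G i = C"
  using assms comp_eq_interval unfolding components_iff[OF assms(1)] is_component_def by blast

lemma finite_components: "finite G \<Longrightarrow> finite (components G)"
  unfolding components_def by simp

lemma components_subset: "C \<in> components G \<Longrightarrow> C \<subseteq> G"
  unfolding components_def using comp_subset by blast

lemma components_eq_empty_iff: "components G = {} \<longleftrightarrow> G = {}"
  unfolding components_def by simp

lemma components_interval: "l \<le> r \<Longrightarrow> components {l..r} = {{l..r}}"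
  unfolding components_def using comp_eq_interval[of l r "{l..r}"] by auto

lemma verts_mono: "A \<subseteq> B \<Longrightarrow> verts A \<subseteq> verts B"
  unfolding verts_def by auto

lemma verts_Union: "verts (\<Union>\<A>) = \<Union> (verts ` \<A>)"
  unfolding verts_def by auto

lemma verts_interval: "l \<le> r \<Longrightarrow> verts {l..r} = {l - 1..r}"
  unfolding verts_def by auto

lemma mem_verts_iff: "v \<in> verts G \<longleftrightarrow> v \<in> G \<or> v + 1 \<in> G"
  unfolding verts_def by simp

text \<open>Gluing vertex-disjoint graphs creates no new adjacencies.\<close>

lemma components_UN_vertex_disjoint:
  assumes "finite A" "\<forall>i\<in>A. finite (H i)"
    and disj: "\<forall>i\<in>A. \<forall>j\<in>A. i \<noteq> j \<longrightarrow> verts (H i) \<inter> verts (H j) = {}"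
  shows "components (\<Union>i\<in>A. H i) = (\<Union>i\<in>A. components (H i))"
proof -
  let ?U = "\<Union>i\<in>A. H i"
  have finU: "finite ?U" using assms(1,2) by blast
  have piece: "C \<in> components ?U" if i: "i \<in> A" and C: "C \<in> components (H i)" for i C
  proof -
    have "is_component (H i) C" using C components_iff assms(2) i by blast
    then obtain l r
      where lr: "l \<le> r" "C = {l..r}" "{l..r} \<subseteq> H i" "l - 1 \<notin> H i" "r + 1 \<notin> H i"
      unfolding is_component_def by blast
    have ends: "l - 1 \<in> verts (H i)" "r \<in> verts (H i)"
      using lr(1,3) by (auto simp: mem_verts_iff)
    have "l - 1 \<notin> H j \<and> r + 1 \<notin> H j" if j: "j \<in> A" for j
    proof (cases "j = i")
      case True
      then show ?thesis using lr(4,5) by simp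
    next
      case False
      then have "verts (H i) \<inter> verts (H j) = {}" using disj i j by blast
      then show ?thesis
        using ends mem_verts_iff[of "l - 1" "H j"] mem_verts_iff[of r "H j"] by blast
    qed
    then have "l - 1 \<notin> ?U" "r + 1 \<notin> ?U" by blast+
    moreover have "{l..r} \<subseteq> ?U" using lr(3) i by blast
    ultimately have "is_component ?U C"
      unfolding is_component_def using lr(1,2) by blast
    then show ?thesis using components_iff[OF finU] by blast
  qed
  show ?thesis
  proof
    show "components ?U \<subseteq> (\<Union>i\<in>A. components (H i))"
    proof
      fix C assume "C \<in> components ?U"
      then obtain e i where e: "C = comp ?U e" "i \<in> A" "e \<in> H i"
        unfolding components_def by blast
      have C': "comp (H i) e \<in> components (H i)" using e(3) unfolding components_def by blast
      then have "comp ?U e = comp (H i) e"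
        using piece[OF e(2)] comp_eq_component[OF finU] comp_self[OF e(3)] by blast
      then show "C \<in> (\<Union>i\<in>A. components (H i))" using C' e by auto
    qed
    show "(\<Union>i\<in>A. components (H i)) \<subseteq> components ?U" using piece by blast
  qed
qed

lemma comp_Suc_mem:
  assumes "v \<in> G" "v + 1 \<in> G"
  shows "v + 1 \<in> comp G v"
proof -
  have "{v..v + 1} = {v, v + 1}" by auto
  then show ?thesis using assms by (simp add: comp_def)
qed

lemma components_vertex_disjoint:
  assumes "finite G" "C \<in> components G" "C' \<in> components G" "C \<noteq> C'"
  shows "verts C \<inter> verts C' = {}"
proof (rule ccontr)
  assume "verts C \<inter> verts C' \<noteq> {}"
  then obtain v where "v \<in> verts C" "v \<in> verts C'" by blast
  then have v: "v \<in> C \<or> v + 1 \<in> C" "v \<in> C' \<or> v + 1 \<in> C'"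
    unfolding mem_verts_iff by blast+
  have shared: False if "x \<in> C" "x \<in> C'" for x
    using comp_eq_component[OF assms(1)] assms(2-4) that by metis
  have step: "v + 1 \<in> D" if "D \<in> components G" "v \<in> D" "v + 1 \<in> G" for D
  proof -
    have "v \<in> G" using that(1,2) components_subset by blast
    then show ?thesis
      using comp_Suc_mem[OF _ that(3)] comp_eq_component[OF assms(1) that(1,2)] by simp
  qed
  have "v + 1 \<in> G" if "v + 1 \<in> C \<or> v + 1 \<in> C'"
    using that components_subset assms(2,3) by blast
  with v show False
    using shared step[OF assms(2)] step[OF assms(3)] by blast
qed

lemma components_of_component:
  assumes "finite G" "C \<in> components G"
  shows "components C = {C}"
proof -
  obtain l r where "l \<le> r" "C = {l..r}" using component_interval[OF assms] .
  then show ?thesis by (simp add: components_interval)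
qed

lemma ominus_subset: "ominus G B \<subseteq> G"
  unfolding ominus_def using components_subset by blast

lemma finite_ominus: "finite G \<Longrightarrow> finite (ominus G B)"
  using ominus_subset finite_subset by blast

lemma components_ominus:
  assumes "finite G"
  shows "components (ominus G B) = {C \<in> components G. verts C \<inter> verts B = {}}"
    (is "_ = ?\<C>")
proof -
  have "finite ?\<C>" using finite_components[OF assms] by simp
  moreover have "\<forall>C\<in>?\<C>. finite C"
    using assms by (auto intro: finite_subset[OF components_subset])
  moreover have "\<forall>C\<in>?\<C>. \<forall>C'\<in>?\<C>. C \<noteq> C' \<longrightarrow> verts C \<inter> verts C' = {}"
    using components_vertex_disjoint[OF assms] by blast
  ultimately have "components (\<Union>C\<in>?\<C>. C) = (\<Union>C\<in>?\<C>. components C)"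
    by (rule components_UN_vertex_disjoint)
  also have "\<dots> = (\<Union>C\<in>?\<C>. {C})"
    using components_of_component[OF assms] by (intro SUP_cong) auto
  finally show ?thesis unfolding ominus_def by simp
qed

lemma Delta_ominus_antimono:
  assumes "finite G" "B \<subseteq> B'"
  shows "Delta (ominus G B') \<le> Delta (ominus G B)"
proof -
  have "components (ominus G B') \<subseteq> components (ominus G B)"
    using verts_mono[OF assms(2)] unfolding components_ominus[OF assms(1)] by blast
  then show ?thesis
    unfolding Delta_def using finite_components[OF finite_ominus[OF assms(1)]] by (rule card_mono[rotated])
qed

lemma lam_eq_Max:
  assumes "finite H"
  shows "lam H = Max (insert 0 (card ` components H))"
proof (cases "H = {}")
  case False
  then have "components H \<noteq> {}" by (simp add: components_eq_empty_iff)
  then show ?thesis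
    unfolding lam_def using False finite_components[OF assms] by (simp add: Max_insert)
qed (simp add: lam_def components_def)

lemma card_le_lam:
  assumes "finite H" "C \<in> components H"
  shows "card C \<le> lam H"
  unfolding lam_eq_Max[OF assms(1)] using assms finite_components by simp

lemma lam_ominus_antimono:
  assumes "finite G" "B \<subseteq> B'"
  shows "lam (ominus G B') \<le> lam (ominus G B)"
proof -
  have "components (ominus G B') \<subseteq> components (ominus G B)"
    using verts_mono[OF assms(2)] unfolding components_ominus[OF assms(1)] by blast
  then show ?thesis
    unfolding lam_eq_Max[OF finite_ominus[OF assms(1)]]
    using finite_components[OF finite_ominus[OF assms(1)]] by (intro Max_mono) auto
qed

lemma card_le_lam_ominus:
  assumes "finite G" "C \<in> components G" "verts C \<inter> verts B = {}"
  shows "card C \<le> lam (ominus G B)"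
  using assms components_ominus[OF assms(1)] by (intro card_le_lam finite_ominus) auto

section \<open>Vector sums of reorderings\<close>

lemma vec_parts_reorder:
  "vec_parts (reorder m G \<sigma>) = map (\<lambda>p. ominus (G (\<sigma> p)) (\<Union> ((G \<circ> \<sigma>) ` {1..<p}))) [1..<m+1]"
proof -
  let ?Hs = "reorder m G \<sigma>"
  have "ominus (?Hs ! l) (\<Union> (set (take l ?Hs))) = ominus (G (\<sigma> (Suc l))) (\<Union> ((G \<circ> \<sigma>) ` {1..<Suc l}))"
    if "l < m" for l
    using that by (simp add: reorder_def take_map take_upt nth_append del: upt_Suc)
  moreover have "[1..<m+1] = map Suc [0..<m]" by (simp add: map_Suc_upt)
  ultimately show ?thesis
    unfolding vec_parts_def by (simp add: reorder_def del: upt_Suc)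
qed

lemma vecDelta_reorder:
  "vecDelta (reorder m G \<sigma>) = (\<Sum>p = 1..m. Delta (ominus (G (\<sigma> p)) (\<Union> ((G \<circ> \<sigma>) ` {1..<p}))))"
  unfolding vecDelta_def vec_parts_reorder map_map
  by (simp add: interv_sum_list_conv_sum_set_nat atLeastLessThanSuc_atLeastAtMost del: upt_Suc)

lemma vecLambda_reorder:
  "vecLambda (reorder m G \<sigma>) = (\<Sum>p = 1..m. lam (ominus (G (\<sigma> p)) (\<Union> ((G \<circ> \<sigma>) ` {1..<p}))))"
  unfolding vecLambda_def vec_parts_reorder map_map
  by (simp add: interv_sum_list_conv_sum_set_nat atLeastLessThanSuc_atLeastAtMost del: upt_Suc)

section \<open>Shift permutations\<close>

definition next_elem :: "nat set \<Rightarrow> nat \<Rightarrow> nat" where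
  "next_elem I x = Min {y \<in> I. x < y}"

definition prev_elem :: "nat set \<Rightarrow> nat \<Rightarrow> nat" where
  "prev_elem I q = Max (insert 0 {x \<in> I. x < q})"

lemma next_elem:
  assumes "finite I" "y \<in> I" "x < y"
  shows "next_elem I x \<in> I" "x < next_elem I x" "next_elem I x \<le> y"
proof -
  have "{y \<in> I. x < y} \<noteq> {}" "finite {y \<in> I. x < y}" using assms by auto
  from Min_in[OF this(2,1)] show "next_elem I x \<in> I" "x < next_elem I x"
    unfolding next_elem_def by auto
  show "next_elem I x \<le> y" unfolding next_elem_def using assms by simp
qed

lemma next_elem_eqI:
  assumes "finite I" "q \<in> I" "x < q" "\<And>y. y \<in> I \<Longrightarrow> x < y \<Longrightarrow> q \<le> y"
  shows "next_elem I x = q"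
  unfolding next_elem_def using assms by (intro Min_eqI) auto

lemma prev_elem:
  assumes "finite I"
  shows "prev_elem I q \<in> insert 0 I" "0 < q \<Longrightarrow> prev_elem I q < q"
    "\<And>x. x \<in> I \<Longrightarrow> x < q \<Longrightarrow> x \<le> prev_elem I q"
proof -
  have fin: "finite (insert 0 {x \<in> I. x < q})" using assms by simp
  have "prev_elem I q \<in> insert 0 {x \<in> I. x < q}" unfolding prev_elem_def by (rule Max_in[OF fin]) simp
  then show "prev_elem I q \<in> insert 0 I" "0 < q \<Longrightarrow> prev_elem I q < q" by auto
  show "\<And>x. x \<in> I \<Longrightarrow> x < q \<Longrightarrow> x \<le> prev_elem I q" unfolding prev_elem_def using fin by simp
qed

text \<open>\<^const>\<open>idx\<close> enumerates \<open>insert 0 I\<close> increasingly: \<open>idx I h\<close> is the \<open>i\<^sub>h\<close> of the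
  paper, with \<open>i\<^sub>0 = 0\<close>.\<close>

lemma idx_0 [simp]: "idx I 0 = 0"
  by (simp add: idx_def)

lemma idx_mem:
  assumes "finite I" "0 < h" "h \<le> card I"
  shows "idx I h \<in> I"
proof -
  have "idx I h = sorted_list_of_set I ! (h - 1)" using assms(2) by (simp add: idx_def)
  also have "\<dots> \<in> set (sorted_list_of_set I)" using assms by (intro nth_mem) simp
  finally show ?thesis using assms(1) by simp
qed

lemma idx_strict_mono:
  assumes "finite I" "0 \<notin> I"
  shows "strict_mono_on {..card I} (idx I)"
proof (rule strict_mono_onI)
  fix i j assume ij: "i \<in> {..card I}" "j \<in> {..card I}" "i < j"
  show "idx I i < idx I j"
  proof (cases "i = 0")
    case True
    then show ?thesis using idx_mem[OF assms(1), of j] ij assms(2) by (cases "idx I j") auto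
  next
    case False
    have "sorted_list_of_set I ! (i - 1) < sorted_list_of_set I ! (j - 1)"
      using ij False assms(1)
      by (intro sorted_wrt_nth_less[OF sorted_list_of_set.strict_sorted_key_list_of_set]) auto
    then show ?thesis using False ij unfolding idx_def by simp
  qed
qed

lemma idx_surj:
  assumes "finite I" "x \<in> insert 0 I"
  obtains h where "h \<le> card I" "idx I h = x"
proof (cases "x = 0")
  case True
  then show ?thesis using that[of 0] by (simp add: idx_def)
next
  case False
  then have "x \<in> set (sorted_list_of_set I)" using assms by simp
  then obtain i where "i < card I" "sorted_list_of_set I ! i = x"
    by (auto simp: in_set_conv_nth)
  then show ?thesis using that[of "Suc i"] by (simp add: idx_def)
qed

lemma idx_card:
  assumes I: "I \<subseteq> {1..m}" "m \<in> I"
  shows "idx I (card I) = m"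
proof -
  have fin: "finite I" using I(1) finite_subset by blast
  have "0 \<notin> I" using I(1) by auto
  then have mono: "strict_mono_on {..card I} (idx I)" using idx_strict_mono[OF fin] by blast
  obtain h where h: "h \<le> card I" "idx I h = m" using idx_surj[OF fin] I(2) by blast
  have "idx I (card I) \<le> m" using idx_mem[OF fin, of "card I"] I by (cases "card I") auto
  then show ?thesis using strict_mono_on_leD[OF mono, of h "card I"] h by simp
qed

lemma idx_Suc:
  assumes "finite I" "0 \<notin> I" "h < card I"
  shows "idx I (Suc h) = next_elem I (idx I h)"
proof (rule sym, rule next_elem_eqI[OF assms(1)])
  note mono = idx_strict_mono[OF assms(1,2)]
  show "idx I (Suc h) \<in> I" using idx_mem[OF assms(1), of "Suc h"] assms(3) by simp
  show "idx I h < idx I (Suc h)" using strict_mono_onD[OF mono] assms(3) by simp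
  fix y assume y: "y \<in> I" "idx I h < y"
  then obtain j where j: "j \<le> card I" "idx I j = y" using idx_surj[OF assms(1)] by blast
  then have "h < j" using strict_mono_on_less[OF mono] y(2) assms(3) by auto
  then show "idx I (Suc h) \<le> y" using strict_mono_on_leD[OF mono, of "Suc h" j] j by simp
qed

lemma sigmaI_eq:
  assumes I: "I \<subseteq> {1..m}" "m \<in> I" and p: "p \<in> {1..m}"
  shows "sigmaI I p = (if p - 1 \<in> insert 0 I then next_elem I (p - 1) else p - 1)"
proof -
  have fin: "finite I" and I0: "0 \<notin> I" using I(1) finite_subset by auto
  let ?P = "\<lambda>h. h \<in> {1..card I} \<and> p = idx I (h - 1) + 1"
  show ?thesis
  proof (cases "p - 1 \<in> insert 0 I")
    case True
    then obtain h where h: "h \<le> card I" "idx I h = p - 1" using idx_surj[OF fin] by blast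
    moreover have "h \<noteq> card I" using idx_card[OF I] h p by auto
    ultimately have Ph: "?P (Suc h)" using p by auto
    have "h' = Suc h" if "?P h'" for h'
      using strict_mono_on_eqD[OF idx_strict_mono[OF fin I0], of h "h' - 1"] that h p by auto
    then have "(THE h. ?P h) = Suc h" using Ph by (rule the_equality[rotated])
    then have "sigmaI I p = idx I (Suc h)" using Ph unfolding sigmaI_def by metis
    then show ?thesis using idx_Suc[OF fin I0] h \<open>h \<noteq> card I\<close> True by simp
  next
    case False
    have "\<not> ?P h" for h using idx_mem[OF fin, of "h - 1"] False by (cases "h - 1 = 0") auto
    then show ?thesis unfolding sigmaI_def using False by auto
  qed
qed

lemma sigmaI_range:
  assumes I: "I \<subseteq> {1..m}" "m \<in> I" and p: "p \<in> {1..m}"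
  shows "sigmaI I p \<in> {1..m}" "p - 1 \<le> sigmaI I p"
proof -
  have "finite I" using I(1) finite_subset by blast
  then have "next_elem I (p - 1) \<in> I" "p - 1 < next_elem I (p - 1)"
    using next_elem[of I m "p - 1"] I(2) p by auto
  then show "sigmaI I p \<in> {1..m}" "p - 1 \<le> sigmaI I p"
    using sigmaI_eq[OF I p] I(1) p by auto
qed

lemma sigmaI_prev_elem:
  assumes I: "I \<subseteq> {1..m}" "m \<in> I" and q: "q \<in> I"
  shows "prev_elem I q + 1 \<in> {1..m}" "sigmaI I (prev_elem I q + 1) = q"
proof -
  have fin: "finite I" using I(1) finite_subset by blast
  have "0 < q" using q I(1) by auto
  then have prev: "prev_elem I q \<in> insert 0 I" "prev_elem I q < q"
    using prev_elem(1,2)[OF fin] by auto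
  show pos: "prev_elem I q + 1 \<in> {1..m}" using prev q I(1) by auto
  have "next_elem I (prev_elem I q) = q"
  proof (rule next_elem_eqI[OF fin q prev(2)])
    fix y assume "y \<in> I" "prev_elem I q < y"
    then show "q \<le> y" using prev_elem(3)[OF fin, of y q] by (cases "y < q") auto
  qed
  then show "sigmaI I (prev_elem I q + 1) = q" using sigmaI_eq[OF I pos] prev by simp
qed

lemma sigmaI_before_prev_elem:
  assumes I: "I \<subseteq> {1..m}" "m \<in> I" and q: "q \<in> I" and p: "p \<in> {1..prev_elem I q}"
  shows "sigmaI I p \<in> {1..prev_elem I q}"
proof -
  have fin: "finite I" using I(1) finite_subset by blast
  have prev: "prev_elem I q \<in> I" using prev_elem(1)[OF fin, of q] p by auto
  then have pm: "p \<in> {1..m}" using p I(1) by auto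
  have "p - 1 < prev_elem I q" using p by auto
  then have "next_elem I (p - 1) \<le> prev_elem I q" by (rule next_elem(3)[OF fin prev])
  then have "sigmaI I p \<le> prev_elem I q" using sigmaI_eq[OF I pm] p by auto
  then show ?thesis using sigmaI_range(1)[OF I pm] by simp
qed

lemma sigmaI_image:
  assumes I: "I \<subseteq> {1..m}" "m \<in> I"
  shows "sigmaI I ` {1..m} = {1..m}"
proof
  show "sigmaI I ` {1..m} \<subseteq> {1..m}" using sigmaI_range(1)[OF I] by blast
  show "{1..m} \<subseteq> sigmaI I ` {1..m}"
  proof
    fix q assume q: "q \<in> {1..m}"
    show "q \<in> sigmaI I ` {1..m}"
    proof (cases "q \<in> I")
      case True
      then show ?thesis using sigmaI_prev_elem[OF I] by (metis image_eqI)
    next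
      case False
      then have qm: "q + 1 \<in> {1..m}" using q I(2) by (cases "q = m") auto
      then have "sigmaI I (q + 1) = q" using sigmaI_eq[OF I qm] False q by simp
      then show ?thesis using qm by (metis image_eqI)
    qed
  qed
qed

lemma shift_perm_sigmaI:
  assumes I: "I \<subseteq> {1..m}" "m \<in> I"
  shows "shift_perm m (sigmaI I)"
proof -
  have "inj_on (sigmaI I) {1..m}" using sigmaI_image[OF I] by (intro eq_card_imp_inj_on) simp_all
  then show ?thesis
    unfolding shift_perm_def bij_betw_def using sigmaI_image[OF I] sigmaI_range(2)[OF I] by blast
qed

lemma tildeI_bounds:
  assumes I: "I \<subseteq> {1..m}" "m \<in> I" and j: "j \<in> {1..m}"
  shows "I \<subseteq> tildeI I j" "tildeI I j \<subseteq> {1..m}"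
proof -
  show "I \<subseteq> tildeI I j" unfolding tildeI_def by auto
  have fin: "finite I" and I0: "0 \<notin> I" using I(1) finite_subset by auto
  let ?P = "\<lambda>h. h \<in> {1..card I} \<and> j = idx I h"
  have "idx I ((THE h. ?P h) - 1) \<le> m" if "j \<in> I"
  proof -
    obtain h where h: "h \<le> card I" "idx I h = j" using idx_surj[OF fin] \<open>j \<in> I\<close> by blast
    then have "?P h" using I0 \<open>j \<in> I\<close> by (cases h) auto
    moreover have "h' = h" if "?P h'" for h'
      using strict_mono_on_eqD[OF idx_strict_mono[OF fin I0], of h h'] that h by auto
    ultimately have P: "?P (THE h. ?P h)" by (rule theI)
    define h0 where "h0 = (THE h. ?P h) - 1"
    have "h0 \<le> card I" using P unfolding h0_def by auto
    then have "idx I h0 \<in> insert 0 I" using idx_mem[OF fin] by (cases "h0 = 0") auto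
    then show ?thesis using I(1) unfolding h0_def by auto
  qed
  then show "tildeI I j \<subseteq> {1..m}" unfolding tildeI_def using I(1) j by auto
qed

lemma sum_le_sum_positions:
  fixes f :: "pgraph \<Rightarrow> nat"
  assumes I: "I \<subseteq> {1..m}" "m \<in> I" and Q: "Q \<subseteq> I"
    and le: "\<And>q B. q \<in> Q \<Longrightarrow> B \<subseteq> \<Union> (G ` {1..prev_elem I q}) \<Longrightarrow> a q \<le> f (ominus (G q) B)"
  shows "(\<Sum>q\<in>Q. a q) \<le> (\<Sum>p = 1..m. f (ominus (G (sigmaI I p)) (\<Union> ((G \<circ> sigmaI I) ` {1..<p}))))"
proof -
  define F where "F p = f (ominus (G (sigmaI I p)) (\<Union> ((G \<circ> sigmaI I) ` {1..<p})))" for p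
  let ?pos = "\<lambda>q. prev_elem I q + 1"
  have "a q \<le> F (?pos q)" if q: "q \<in> Q" for q
  proof -
    have "sigmaI I ` {1..<?pos q} \<subseteq> {1..prev_elem I q}"
      using sigmaI_before_prev_elem[OF I] q Q by fastforce
    then have "\<Union> ((G \<circ> sigmaI I) ` {1..<?pos q}) \<subseteq> \<Union> (G ` {1..prev_elem I q})"
      by (auto simp: image_comp[symmetric])
    from le[OF q this] show ?thesis unfolding F_def using sigmaI_prev_elem(2)[OF I, of q] q Q by auto
  qed
  then have "(\<Sum>q\<in>Q. a q) \<le> (\<Sum>q\<in>Q. F (?pos q))" by (rule sum_mono)
  also have "\<dots> = (\<Sum>p\<in>?pos ` Q. F p)"
  proof -
    have "inj_on ?pos Q"
      by (rule inj_on_inverseI[where g = "sigmaI I"]) (use sigmaI_prev_elem(2)[OF I] Q in auto)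
    then show ?thesis by (simp add: sum.reindex)
  qed
  also have "\<dots> \<le> (\<Sum>p = 1..m. F p)"
    using sigmaI_prev_elem(1)[OF I] Q by (intro sum_mono2) auto
  finally show ?thesis unfolding F_def .
qed

section \<open>The parts summed in the vector quantities\<close>

definition vec_part :: "(nat \<Rightarrow> pgraph) \<Rightarrow> nat \<Rightarrow> pgraph" where
  "vec_part G i = ominus (G i) (\<Union> (G ` {1..<i}))"

definition vec_union :: "(nat \<Rightarrow> pgraph) \<Rightarrow> nat \<Rightarrow> pgraph" where
  "vec_union G m = (\<Union>i\<in>{1..m}. vec_part G i)"

lemma finite_vec_part: "finite (G i) \<Longrightarrow> finite (vec_part G i)"
  unfolding vec_part_def by (rule finite_ominus)

lemma verts_vec_part_disjoint:
  assumes "i \<in> {1..<j}"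
  shows "verts (vec_part G i) \<inter> verts (vec_part G j) = {}"
proof -
  have "verts (vec_part G i) \<subseteq> verts (\<Union> (G ` {1..<j}))"
    using assms ominus_subset unfolding vec_part_def by (intro verts_mono) blast
  moreover have "verts (vec_part G j) \<inter> verts (\<Union> (G ` {1..<j})) = {}"
    unfolding vec_part_def ominus_def verts_Union by blast
  ultimately show ?thesis by blast
qed

lemma components_vec_union:
  assumes "\<forall>i\<in>{1..m}. finite (G i)"
  shows "components (vec_union G m) = (\<Union>i\<in>{1..m}. components (vec_part G i))"
  unfolding vec_union_def
proof (rule components_UN_vertex_disjoint)
  show "\<forall>i\<in>{1..m}. finite (vec_part G i)" using assms finite_vec_part by blast
  show "\<forall>i\<in>{1..m}. \<forall>j\<in>{1..m}. i \<noteq> j \<longrightarrow> verts (vec_part G i) \<inter> verts (vec_part G j) = {}"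
    using verts_vec_part_disjoint by (metis Int_commute atLeastAtMost_iff atLeastLessThan_iff linorder_neqE_nat)
qed simp

lemma finite_vec_union: "\<forall>i\<in>{1..m}. finite (G i) \<Longrightarrow> finite (vec_union G m)"
  unfolding vec_union_def using finite_vec_part by blast

lemma vecDelta_ge_sum_vec_part:
  assumes fin: "\<forall>i\<in>{1..m}. finite (G i)" and I: "I \<subseteq> {1..m}" "m \<in> I"
  shows "(\<Sum>q\<in>I. Delta (vec_part G q)) \<le> vecDelta (reorder m G (sigmaI I))"
  unfolding vecDelta_reorder
proof (rule sum_le_sum_positions[OF I order_refl])
  fix q B assume q: "q \<in> I" and B: "B \<subseteq> \<Union> (G ` {1..prev_elem I q})"
  have "prev_elem I q < q" using prev_elem(2)[of I q] I(1) q finite_subset by fastforce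
  then have "B \<subseteq> \<Union> (G ` {1..<q})" using B by fastforce
  then show "Delta (vec_part G q) \<le> Delta (ominus (G q) B)"
    unfolding vec_part_def using Delta_ominus_antimono fin q I(1) by blast
qed

lemma vecLambda_ge_sum_lam:
  assumes fin: "\<forall>i\<in>{1..m}. finite (G i)" and I: "I \<subseteq> {1..m}" "m \<in> I" and Q: "Q \<subseteq> I"
  shows "(\<Sum>q\<in>Q. lam (ominus (G q) (\<Union> (G ` {1..prev_elem I q}))))
    \<le> vecLambda (reorder m G (sigmaI I))"
  unfolding vecLambda_reorder
  using I Q lam_ominus_antimono fin by (intro sum_le_sum_positions) blast+

section \<open>Descending chains of components\<close>

lemma components_meeting_vertex:
  assumes "v \<in> verts H"
  obtains C where "C \<in> components H" "v \<in> verts C"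
proof -
  obtain e where "e \<in> H" "e = v \<or> e = v + 1" using assms by (auto simp: mem_verts_iff)
  then have "comp H e \<in> components H" "v \<in> verts (comp H e)"
    using comp_self[of e H] unfolding components_def by (auto simp: mem_verts_iff)
  then show ?thesis by (rule that)
qed

definition descending_chain ::
    "(nat \<Rightarrow> pgraph) \<Rightarrow> nat \<Rightarrow> nat \<Rightarrow> (nat \<Rightarrow> nat) \<Rightarrow> (nat \<Rightarrow> pgraph) \<Rightarrow> bool" where
  "descending_chain G m L t C \<longleftrightarrow>
     (\<forall>n\<le>L. t n \<in> {1..m} \<and> C n \<in> components (G (t n))) \<and>
     (\<forall>j<L. t (Suc j) < t j \<and> verts (C (Suc j)) \<inter> verts (C j) \<noteq> {} \<and>
        (\<forall>i\<in>{1..<t (Suc j)}. verts (C j) \<inter> verts (G i) = {})) \<and>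
     (\<forall>i\<in>{1..<t L}. verts (C L) \<inter> verts (G i) = {})"

lemma descending_chain_Cons:
  assumes chain: "descending_chain G m L t C"
    and C0: "t0 \<in> {1..m}" "C0 \<in> components (G t0)"
    and step: "t 0 < t0" "verts (C 0) \<inter> verts C0 \<noteq> {}"
      "\<forall>i\<in>{1..<t 0}. verts C0 \<inter> verts (G i) = {}"
  shows "descending_chain G m (Suc L) (case_nat t0 t) (case_nat C0 C)"
proof -
  have ch: "\<forall>n\<le>L. t n \<in> {1..m} \<and> C n \<in> components (G (t n))"
    "\<forall>j<L. t (Suc j) < t j \<and> verts (C (Suc j)) \<inter> verts (C j) \<noteq> {} \<and>
       (\<forall>i\<in>{1..<t (Suc j)}. verts (C j) \<inter> verts (G i) = {})"
    "\<forall>i\<in>{1..<t L}. verts (C L) \<inter> verts (G i) = {}"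
    using chain unfolding descending_chain_def by blast+
  have "case_nat t0 t n \<in> {1..m} \<and> case_nat C0 C n \<in> components (G (case_nat t0 t n))"
    if "n \<le> Suc L" for n
    using that ch(1) C0 by (cases n) auto
  moreover have "case_nat t0 t (Suc j) < case_nat t0 t j \<and>
      verts (case_nat C0 C (Suc j)) \<inter> verts (case_nat C0 C j) \<noteq> {} \<and>
      (\<forall>i\<in>{1..<case_nat t0 t (Suc j)}. verts (case_nat C0 C j) \<inter> verts (G i) = {})"
    if "j < Suc L" for j
    using that ch(2) step by (cases j) auto
  moreover have "\<forall>i\<in>{1..<case_nat t0 t (Suc L)}. verts (case_nat C0 C (Suc L)) \<inter> verts (G i) = {}"
    using ch(3) by simp
  ultimately show ?thesis unfolding descending_chain_def by blast
qed

lemma descending_chain_exists: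
  assumes "t0 \<in> {1..m}" "C0 \<in> components (G t0)"
  shows "\<exists>L t C. t 0 = t0 \<and> C 0 = C0 \<and> descending_chain G m L t C"
  using assms
proof (induction t0 arbitrary: C0 rule: less_induct)
  case (less t0)
  let ?meets = "\<lambda>i. i \<in> {1..<t0} \<and> verts C0 \<inter> verts (G i) \<noteq> {}"
  show ?case
  proof (cases "\<exists>i. ?meets i")
    case False
    then have "descending_chain G m 0 (\<lambda>_. t0) (\<lambda>_. C0)"
      using less.prems unfolding descending_chain_def by auto
    then show ?thesis by (intro exI[of _ 0] exI[of _ "\<lambda>_. t0"] exI[of _ "\<lambda>_. C0"]) simp
  next
    case True
    define t1 where "t1 = (LEAST i. ?meets i)"
    have t1: "?meets t1" unfolding t1_def using True by (rule LeastI_ex)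
    have first: "\<forall>i\<in>{1..<t1}. verts C0 \<inter> verts (G i) = {}"
    proof
      fix i assume i: "i \<in> {1..<t1}"
      then have "\<not> ?meets i" unfolding t1_def by (intro not_less_Least) auto
      then show "verts C0 \<inter> verts (G i) = {}" using i t1 by auto
    qed
    obtain v where "v \<in> verts C0" "v \<in> verts (G t1)" using t1 by blast
    then obtain C1 where C1: "C1 \<in> components (G t1)" "verts C1 \<inter> verts C0 \<noteq> {}"
      by (blast elim: components_meeting_vertex)
    have "t1 < t0" "t1 \<in> {1..m}" using t1 less.prems(1) by auto
    then obtain L t C where chain: "t 0 = t1" "C 0 = C1" "descending_chain G m L t C"
      using less.IH C1(1) by blast
    have "t 0 < t0" "verts (C 0) \<inter> verts C0 \<noteq> {}" "\<forall>i\<in>{1..<t 0}. verts C0 \<inter> verts (G i) = {}"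
      using chain(1,2) \<open>t1 < t0\<close> C1(2) first by simp_all
    then have "descending_chain G m (Suc L) (case_nat t0 t) (case_nat C0 C)"
      by (rule descending_chain_Cons[OF chain(3) less.prems])
    then show ?thesis by (intro exI[of _ "Suc L"] exI[of _ "case_nat t0 t"] exI[of _ "case_nat C0 C"]) simp
  qed
qed

lemma descending_chain_less:
  assumes "descending_chain G m L t C" "i < j" "j \<le> L"
  shows "t j < t i"
  using assms(2,3)
proof (induction j)
  case (Suc j)
  have "t (Suc j) < t j" using assms(1) Suc.prems(2) unfolding descending_chain_def by simp
  then show ?case using Suc by (cases "i = j") auto
qed simp

lemma descending_chain_last:
  assumes fin: "\<forall>i\<in>{1..m}. finite (G i)" and chain: "descending_chain G m L t C"
  shows "C L \<in> components (vec_union G m)"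
proof -
  have tL: "t L \<in> {1..m}" "C L \<in> components (G (t L))"
    using chain unfolding descending_chain_def by auto
  have "verts (C L) \<inter> verts (\<Union> (G ` {1..<t L})) = {}"
    using chain unfolding descending_chain_def verts_Union by blast
  then have "C L \<in> components (vec_part G (t L))"
    unfolding vec_part_def using components_ominus tL fin by blast
  then show ?thesis using components_vec_union[OF fin] tL(1) by blast
qed

text \<open>For the component \<open>Path\<^sub>s\<^sub>,\<^sub>t\<close>, encoded by the edges \<open>{s+1..t}\<close>, this is the
  segment \<open>[s, t]\<close>.\<close>

definition extent :: "pgraph \<Rightarrow> real set" where
  "extent C = {real_of_int (Min C) - 1..real_of_int (Max C)}"

lemma component_extent:
  assumes "finite G" "C \<in> components G"
  shows "real (card C) = real_of_int (Max C) - (real_of_int (Min C) - 1)"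
    "midpoint C = (real_of_int (Min C) - 1 + real_of_int (Max C)) / 2"
    "v \<in> verts C \<Longrightarrow> real_of_int v \<in> extent C"
    "e \<in> C \<Longrightarrow> {real_of_int e - 1..real_of_int e} \<subseteq> extent C"
proof -
  obtain l r where lr: "l \<le> r" "C = {l..r}" using component_interval[OF assms] .
  then have mm: "Min C = l" "Max C = r" by (auto intro: Min_eqI Max_eqI)
  show "real (card C) = real_of_int (Max C) - (real_of_int (Min C) - 1)" using lr mm by simp
  show "midpoint C = (real_of_int (Min C) - 1 + real_of_int (Max C)) / 2"
    unfolding midpoint_def by simp
  show "v \<in> verts C \<Longrightarrow> real_of_int v \<in> extent C"
    using lr mm unfolding extent_def by (auto simp: verts_interval)
  show "e \<in> C \<Longrightarrow> {real_of_int e - 1..real_of_int e} \<subseteq> extent C"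
    using lr mm unfolding extent_def by auto
qed

lemma extent_diam:
  assumes "finite G" "C \<in> components G" "x \<in> extent C" "x' \<in> extent C"
  shows "\<bar>x - x'\<bar> \<le> real (card C)"
  using assms(3,4) component_extent(1)[OF assms(1,2)] unfolding extent_def by auto

lemma midpoint_extent_dist:
  assumes "finite G" "C \<in> components G" "x \<in> extent C"
  shows "\<bar>midpoint C - x\<bar> \<le> real (card C) / 2"
proof -
  have "real_of_int (Min C) - 1 \<le> x" "x \<le> real_of_int (Max C)"
    using assms(3) unfolding extent_def by auto
  then show ?thesis
    using component_extent(1,2)[OF assms(1,2)] by argo
qed

lemma card_component_pos:
  assumes "finite G" "C \<in> components G"
  shows "1 \<le> card C"
  using assms components_subset finite_subset components_eq_empty_iff components_of_component
  by (metis One_nat_def Suc_leI card_gt_0_iff empty_not_insert)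

lemma descending_chain_reach:
  assumes fin: "\<forall>i\<in>{1..m}. finite (G i)" and chain: "descending_chain G m L t C"
    and y: "y \<in> extent (C 0)" and n: "n \<le> L"
  shows "\<exists>x\<in>extent (C n). \<bar>x - y\<bar> \<le> (\<Sum>j<n. real (card (C j)))"
  using n
proof (induction n)
  case 0
  then show ?case using y by auto
next
  case (Suc n)
  then obtain x where x: "x \<in> extent (C n)" "\<bar>x - y\<bar> \<le> (\<Sum>j<n. real (card (C j)))" by auto
  have comp: "finite (G (t n))" "C n \<in> components (G (t n))"
    "finite (G (t (Suc n)))" "C (Suc n) \<in> components (G (t (Suc n)))"
    using chain fin Suc.prems unfolding descending_chain_def by auto
  have "verts (C (Suc n)) \<inter> verts (C n) \<noteq> {}"
    using chain Suc.prems unfolding descending_chain_def by (simp add: Suc_le_eq)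
  then obtain v where "v \<in> verts (C (Suc n))" "v \<in> verts (C n)" by blast
  then have v: "real_of_int v \<in> extent (C (Suc n))" "real_of_int v \<in> extent (C n)"
    using component_extent(3) comp by blast+
  have "\<bar>real_of_int v - x\<bar> \<le> real (card (C n))" using extent_diam[OF comp(1,2) v(2) x(1)] .
  then show ?case using v(1) x(2) by (intro bexI[of _ "real_of_int v"]) auto
qed

section \<open>The gap\<close>

definition midpoint_dist :: "pgraph \<Rightarrow> real \<Rightarrow> real" where
  "midpoint_dist U y = Min ((\<lambda>C. \<bar>midpoint C - y\<bar>) ` components U)"

lemma midpoint_dist_le:
  "finite U \<Longrightarrow> C \<in> components U \<Longrightarrow> midpoint_dist U y \<le> \<bar>midpoint C - y\<bar>"
  unfolding midpoint_dist_def using finite_components by simp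

lemma midpoint_dist_attained:
  assumes "finite U" "U \<noteq> {}"
  obtains C where "C \<in> components U" "midpoint_dist U y = \<bar>midpoint C - y\<bar>"
proof -
  have "midpoint_dist U y \<in> (\<lambda>C. \<bar>midpoint C - y\<bar>) ` components U"
    unfolding midpoint_dist_def using assms finite_components components_eq_empty_iff
    by (intro Min_in) auto
  then show ?thesis using that by blast
qed

lemma gap_eq_SUP:
  "gap k (reorder m G id) = (SUP y\<in>{0..real k}. midpoint_dist (vec_union G m) y)"
proof -
  have "set (vec_parts (reorder m G id)) = vec_part G ` {1..m}"
    unfolding vec_parts_reorder vec_part_def by (auto simp: atLeastLessThanSuc_atLeastAtMost)
  then show ?thesis unfolding gap_def midpoint_dist_def vec_union_def by simp
qed

lemma vec_union_nonempty:
  assumes fin: "\<forall>i\<in>{1..m}. finite (G i)" and "1 \<le> k" and "(\<Union>i\<in>{1..m}. G i) = {1..int k}"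
  shows "vec_union G m \<noteq> {}"
proof -
  obtain i where i: "i \<in> {1..m}" "1 \<in> G i" using assms(2,3) by (metis UN_iff atLeastAtMost_iff order_refl of_nat_1 of_nat_le_iff)
  then have "comp (G i) 1 \<in> components (G i)" unfolding components_def by blast
  then obtain L t C where "descending_chain G m L t C"
    using descending_chain_exists i(1) by blast
  then show ?thesis using descending_chain_last[OF fin] components_eq_empty_iff by blast
qed

lemma interval_cover_length:
  fixes M :: "real set"
  assumes "finite M" "a \<le> b" "\<forall>y\<in>{a..b}. \<exists>\<mu>\<in>M. \<bar>\<mu> - y\<bar> \<le> g"
  shows "b - a \<le> 2 * g * real (card M)"
  using assms
proof (induction M arbitrary: a rule: finite_psubset_induct)
  case (psubset M)
  have "a \<in> {a..b}" using psubset.prems(1) by simp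
  then obtain \<mu> where \<mu>: "\<mu> \<in> M" "\<bar>\<mu> - a\<bar> \<le> g" using psubset.prems(2) by blast
  have g: "0 \<le> g" using \<mu>(2) by linarith
  have card: "2 * g * real (card M) = 2 * g + 2 * g * real (card (M - {\<mu>}))"
    using card.remove[OF psubset.hyps(1) \<mu>(1)] by (simp add: algebra_simps)
  show ?case
  proof (cases "b \<le> \<mu> + g")
    case True
    moreover have "0 \<le> 2 * g * real (card (M - {\<mu>}))" using g by simp
    ultimately show ?thesis using \<mu>(2) card unfolding abs_le_iff by linarith
  next
    case False
    have "b - 2 * g * real (card (M - {\<mu>})) \<le> \<mu> + g"
    proof (rule dense_ge_bounded)
      show "\<mu> + g < b" using False by simp
      fix a' assume a': "\<mu> + g < a'" "a' < b"
      have "\<forall>y\<in>{a'..b}. \<exists>\<mu>'\<in>M - {\<mu>}. \<bar>\<mu>' - y\<bar> \<le> g"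
      proof
        fix y assume y: "y \<in> {a'..b}"
        then have "y \<in> {a..b}" using \<mu>(2) a'(1) by auto
        then obtain \<mu>' where "\<mu>' \<in> M" "\<bar>\<mu>' - y\<bar> \<le> g" using psubset.prems(2) by blast
        moreover have "\<mu>' \<noteq> \<mu>" using calculation(2) y a'(1) by auto
        ultimately show "\<exists>\<mu>'\<in>M - {\<mu>}. \<bar>\<mu>' - y\<bar> \<le> g" by blast
      qed
      then have "b - a' \<le> 2 * g * real (card (M - {\<mu>}))"
        using psubset.IH[of "M - {\<mu>}" a'] \<mu>(1) a'(2) by auto
      then show "b - 2 * g * real (card (M - {\<mu>})) \<le> a'" by linarith
    qed
    then show ?thesis using \<mu>(2) card unfolding abs_le_iff by linarith
  qed
qed

lemma bdd_above_midpoint_dist: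
  assumes "finite U" "U \<noteq> {}"
  shows "bdd_above (midpoint_dist U ` {0..real k})"
proof -
  obtain C where C: "C \<in> components U" using assms(2) components_eq_empty_iff by blast
  show ?thesis
  proof (rule bdd_aboveI2)
    fix y assume "y \<in> {0..real k}"
    then show "midpoint_dist U y \<le> \<bar>midpoint C\<bar> + real k"
      using midpoint_dist_le[OF assms(1) C, of y] by (smt (verit) atLeastAtMost_iff)
  qed
qed

lemma gap_ge_midpoint_dist:
  assumes "\<forall>i\<in>{1..m}. finite (G i)" "vec_union G m \<noteq> {}" "y \<in> {0..real k}"
  shows "midpoint_dist (vec_union G m) y \<le> gap k (reorder m G id)"
  unfolding gap_eq_SUP
  by (rule cSUP_upper[OF assms(3) bdd_above_midpoint_dist[OF finite_vec_union[OF assms(1)] assms(2)]])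

lemma gap_approx:
  assumes "\<forall>i\<in>{1..m}. finite (G i)" "vec_union G m \<noteq> {}"
  shows "\<exists>y\<in>{0..real k}. gap k (reorder m G id) - 1/2 < midpoint_dist (vec_union G m) y"
proof -
  have "gap k (reorder m G id) - 1/2 < (SUP y\<in>{0..real k}. midpoint_dist (vec_union G m) y)"
    unfolding gap_eq_SUP by simp
  then show ?thesis
    using less_cSUP_iff[OF _ bdd_above_midpoint_dist[OF finite_vec_union[OF assms(1)] assms(2)]] by simp
qed

lemma gap_cover:
  assumes fin: "\<forall>i\<in>{1..m}. finite (G i)" and k: "1 \<le> k" and U: "vec_union G m \<noteq> {}"
  shows "0 < gap k (reorder m G id)"
    "real k \<le> 2 * gap k (reorder m G id) * real (\<Sum>i = 1..m. Delta (vec_part G i))"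
proof -
  let ?g = "gap k (reorder m G id)" and ?U = "vec_union G m"
  let ?M = "midpoint ` components ?U"
  have finU: "finite ?U" using fin by (rule finite_vec_union)
  have "\<forall>y\<in>{0..real k}. \<exists>\<mu>\<in>?M. \<bar>\<mu> - y\<bar> \<le> ?g"
  proof
    fix y assume y: "y \<in> {0..real k}"
    obtain C where "C \<in> components ?U" "midpoint_dist ?U y = \<bar>midpoint C - y\<bar>"
      using midpoint_dist_attained[OF finU U] .
    then show "\<exists>\<mu>\<in>?M. \<bar>\<mu> - y\<bar> \<le> ?g" using gap_ge_midpoint_dist[OF fin U y] by auto
  qed
  then have cover: "real k \<le> 2 * ?g * real (card ?M)"
    using interval_cover_length[of ?M 0 "real k" ?g] finite_components[OF finU] by simp
  show pos: "0 < ?g"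
  proof (rule ccontr)
    assume "\<not> 0 < ?g"
    then have "2 * ?g * real (card ?M) \<le> 0" by (simp add: mult_nonpos_nonneg)
    then show False using cover k by linarith
  qed
  have "card ?M \<le> card (components ?U)" using finite_components[OF finU] by (rule card_image_le)
  also have "\<dots> \<le> (\<Sum>i = 1..m. card (components (vec_part G i)))"
    unfolding components_vec_union[OF fin] by (rule card_UN_le) simp
  finally have "real (card ?M) \<le> real (\<Sum>i = 1..m. Delta (vec_part G i))"
    unfolding Delta_def by linarith
  then show "real k \<le> 2 * ?g * real (\<Sum>i = 1..m. Delta (vec_part G i))"
    using cover pos by (smt (verit) mult_left_mono)
qed

section \<open>Light sparse sets of heavy items\<close>

lemma exists_max_density:
  fixes w p :: "'a \<Rightarrow> real"
  assumes "finite X" "X \<noteq> {}" "\<forall>x\<in>X. 0 < w x"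
  obtains z where "z \<in> X" "\<forall>x\<in>X. p x * w z \<le> p z * w x"
proof -
  let ?d = "\<lambda>x. p x / w x"
  have "Max (?d ` X) \<in> ?d ` X" using assms(1,2) by (intro Max_in) auto
  then obtain z where z: "z \<in> X" "?d z = Max (?d ` X)" by auto
  have "p x * w z \<le> p z * w x" if "x \<in> X" for x
  proof -
    have "?d x \<le> ?d z" using z(2) assms(1) that by simp
    then show ?thesis using assms(3) z(1) that by (simp add: field_simps)
  qed
  then show ?thesis using z(1) that by blast
qed

text \<open>Greedy: discard items of maximal profit density \<open>p / w\<close> as long as the remaining weight
  stays above \<open>\<tau>\<close>; the density of what is left never exceeds the initial one.\<close>

lemma knapsack_density:
  fixes w p :: "'a \<Rightarrow> real"
  assumes "finite X" "\<forall>x\<in>X. 0 < w x \<and> w x \<le> \<Lambda> \<and> 0 \<le> p x" "0 < \<Lambda>" "0 \<le> \<tau>" "\<tau> \<le> sum w X"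
  shows "\<exists>A\<subseteq>X. \<tau> \<le> sum w A \<and> sum w A < \<tau> + \<Lambda> \<and> sum p A * sum w X \<le> sum p X * sum w A"
  using assms
proof (induction X rule: finite_psubset_induct)
  case (psubset X)
  show ?case
  proof (cases "\<tau> = 0")
    case True
    then show ?thesis using psubset.prems(2) by (intro exI[of _ "{}"]) auto
  next
    case False
    then have "X \<noteq> {}" using psubset.prems(3,4) by auto
    then obtain z where z: "z \<in> X" "\<forall>x\<in>X. p x * w z \<le> p z * w x"
      using exists_max_density[OF psubset.hyps] psubset.prems(1) by blast
    let ?X' = "X - {z}"
    have sw: "sum w X = w z + sum w ?X'" and sp: "sum p X = p z + sum p ?X'"
      using sum.remove[OF psubset.hyps z(1)] by auto
    show ?thesis
    proof (cases "\<tau> \<le> sum w ?X'")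
      case True
      obtain A where A: "A \<subseteq> ?X'" "\<tau> \<le> sum w A" "sum w A < \<tau> + \<Lambda>"
          "sum p A * sum w ?X' \<le> sum p ?X' * sum w A"
        using psubset.IH[of ?X'] z(1) psubset.prems True by auto
      have pos: "0 < sum w ?X'" "0 \<le> sum w A" "0 \<le> sum w X"
        using True False psubset.prems(1,3) A(2) sw z(1) by auto
      have "sum p ?X' * w z = (\<Sum>x\<in>?X'. p x * w z)" by (simp add: sum_distrib_right)
      also have "\<dots> \<le> (\<Sum>x\<in>?X'. p z * w x)" using z(2) by (intro sum_mono) auto
      also have "\<dots> = p z * sum w ?X'" by (simp add: sum_distrib_left)
      finally have "sum p ?X' * sum w X \<le> sum p X * sum w ?X'"
        unfolding sw sp by (simp add: algebra_simps)
      then have "sum p A * sum w X * sum w ?X' \<le> sum p X * sum w A * sum w ?X'"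
        using A(4) pos mult_right_mono[OF A(4), of "sum w X"] mult_left_mono[of _ _ "sum w A"]
        by (smt (verit) mult.commute mult.left_commute)
      then show ?thesis using A pos(1) by (intro exI[of _ A]) auto
    next
      case False
      then show ?thesis
        using sw z psubset.prems(1,4) by (intro exI[of _ X]) fastforce
    qed
  qed
qed

lemma sparse_light_subset:
  fixes w p :: "nat \<Rightarrow> real"
  assumes fin: "finite X" and items: "\<forall>x\<in>X. 0 < w x \<and> w x \<le> \<Lambda> \<and> 0 \<le> p x"
    and "0 < \<Lambda>" "0 \<le> \<tau>" and heavy: "2 * (\<tau> + \<Lambda>) \<le> sum w X"
  shows "\<exists>J\<subseteq>X. \<tau> / 2 \<le> sum w J \<and> 2 * sum p J \<le> sum p X \<and> (\<forall>j\<in>J. Suc j \<notin> J)"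
proof -
  have "\<tau> \<le> sum w X" using heavy assms(3,4) by argo
  then obtain A where A: "A \<subseteq> X" "\<tau> \<le> sum w A" "sum w A < \<tau> + \<Lambda>"
      "sum p A * sum w X \<le> sum p X * sum w A"
    using knapsack_density[OF fin items assms(3,4)] by blast
  have W: "0 < sum w X" using heavy assms(3,4) by argo
  have "sum w A \<le> sum w X / 2" using A(3) heavy by argo
  moreover have "0 \<le> sum p X" using items by (simp add: sum_nonneg)
  ultimately have "sum p X * sum w A \<le> sum p X * (sum w X / 2)" by (rule mult_left_mono)
  with A(4) have "(2 * sum p A) * sum w X \<le> sum p X * sum w X" by simp
  then have light: "2 * sum p A \<le> sum p X" using W by (rule mult_right_le_imp_le)
  have finA: "finite A" using A(1) fin finite_subset by blast
  have "sum w ({j\<in>A. even j} \<union> {j\<in>A. odd j}) = sum w {j\<in>A. even j} + sum w {j\<in>A. odd j}"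
    using finA by (intro sum.union_disjoint) auto
  moreover have "{j\<in>A. even j} \<union> {j\<in>A. odd j} = A" by auto
  ultimately have split: "sum w A = sum w {j\<in>A. even j} + sum w {j\<in>A. odd j}" by simp
  obtain J where J: "J = {j\<in>A. even j} \<or> J = {j\<in>A. odd j}" "\<tau> / 2 \<le> sum w J"
  proof (cases "\<tau> / 2 \<le> sum w {j\<in>A. even j}")
    case False
    then have "\<tau> / 2 \<le> sum w {j\<in>A. odd j}" using split A(2) by linarith
    then show ?thesis using that by blast
  qed (use that in blast)
  have "sum p J \<le> sum p A" using J(1) finA items A(1) by (intro sum_mono2) auto
  then show ?thesis using J A(1) light by (intro exI[of _ J]) auto
qed

section \<open>The index set\<close>

lemma vecDelta_tildeI_ge:
  assumes fin: "\<forall>i\<in>{1..m}. finite (G i)" and k: "1 \<le> k" and U: "vec_union G m \<noteq> {}"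
    and I: "I \<subseteq> {1..m}" "m \<in> I"
    and cost: "2 * (\<Sum>i\<in>{1..m} - I. real (Delta (vec_part G i))) \<le> (\<Sum>i = 1..m. real (Delta (vec_part G i)))"
    and j: "j \<in> {1..m}"
  shows "real k / (4 * gap k (reorder m G id)) \<le> real (vecDelta (reorder m G (sigmaI (tildeI I j))))"
proof -
  let ?g = "gap k (reorder m G id)" and ?D = "\<Sum>i = 1..m. real (Delta (vec_part G i))"
  have I': "I \<subseteq> tildeI I j" "tildeI I j \<subseteq> {1..m}" "m \<in> tildeI I j"
    using tildeI_bounds[OF I j] I(2) by auto
  have "?D = (\<Sum>i\<in>{1..m} - I. real (Delta (vec_part G i))) + (\<Sum>q\<in>I. real (Delta (vec_part G q)))"
    using I(1) by (simp add: sum.subset_diff)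
  also have "(\<Sum>q\<in>I. real (Delta (vec_part G q))) \<le> real (vecDelta (reorder m G (sigmaI (tildeI I j))))"
  proof -
    have "(\<Sum>q\<in>I. Delta (vec_part G q)) \<le> (\<Sum>q\<in>tildeI I j. Delta (vec_part G q))"
      using I'(1,2) finite_subset by (intro sum_mono2) auto
    also have "\<dots> \<le> vecDelta (reorder m G (sigmaI (tildeI I j)))"
      using vecDelta_ge_sum_vec_part[OF fin I'(2,3)] .
    finally show ?thesis unfolding of_nat_sum[symmetric] of_nat_le_iff .
  qed
  finally have "?D \<le> 2 * real (vecDelta (reorder m G (sigmaI (tildeI I j))))"
    using cost by linarith
  moreover have "real k / (4 * ?g) \<le> ?D / 2"
    using gap_cover[OF fin k U] by (simp add: field_simps)
  ultimately show ?thesis by linarith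
qed

definition chain_index_set :: "nat \<Rightarrow> (nat \<Rightarrow> nat) \<Rightarrow> nat set \<Rightarrow> nat set" where
  "chain_index_set m t J = {1..m} - (\<Union>j\<in>J. {t (Suc j)..<t j})"

lemma sum_diff_chain_index_set:
  fixes f :: "nat \<Rightarrow> 'a::comm_monoid_add"
  assumes chain: "descending_chain G m L t C" and J: "J \<subseteq> {..<L}"
  shows "(\<Sum>i\<in>{1..m} - chain_index_set m t J. f i) = (\<Sum>j\<in>J. \<Sum>i\<in>{t (Suc j)..<t j}. f i)"
proof -
  have t: "t n \<in> {1..m}" if "n \<le> L" for n using chain that unfolding descending_chain_def by auto
  have "{t (Suc j)..<t j} \<subseteq> {1..m}" if "j \<in> J" for j
    using t[of j] t[of "Suc j"] that J by auto
  then have "{1..m} - chain_index_set m t J = (\<Union>j\<in>J. {t (Suc j)..<t j})"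
    unfolding chain_index_set_def by blast
  moreover have "{t (Suc i)..<t i} \<inter> {t (Suc j)..<t j} = {}" if "i \<in> J" "j \<in> J" "i < j" for i j
  proof -
    have "t j \<le> t (Suc i)"
      using descending_chain_less[OF chain, of "Suc i" j] that J by (cases "Suc i = j") auto
    then show ?thesis by auto
  qed
  then have "\<forall>i\<in>J. \<forall>j\<in>J. i \<noteq> j \<longrightarrow> {t (Suc i)..<t i} \<inter> {t (Suc j)..<t j} = {}"
    by (metis inf_commute linorder_neqE_nat)
  moreover have "finite J" using J finite_subset by blast
  ultimately show ?thesis by (simp add: sum.UNION_disjoint)
qed

lemma chain_index_set_lead:
  assumes chain: "descending_chain G m L t C"
    and J: "J \<subseteq> {..<L}" "\<forall>j\<in>J. Suc j \<notin> J" and j: "j \<in> J"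
  shows "t j \<in> chain_index_set m t J" "prev_elem (chain_index_set m t J) (t j) < t (Suc j)"
proof -
  let ?I = "chain_index_set m t J"
  have t: "t n \<in> {1..m}" if "n \<le> L" for n using chain that unfolding descending_chain_def by auto
  have less: "t b < t a" if "a < b" "b \<le> L" for a b using descending_chain_less[OF chain that] .
  have "t j \<notin> {t (Suc j')..<t j'}" if "j' \<in> J" for j'
  proof (cases "j' < j")
    case True
    then have "Suc j' < j" using J(2) that j by (metis Suc_lessI)
    then show ?thesis using less[of "Suc j'" j] j J(1) by auto
  next
    case False
    then show ?thesis using less[of j j'] that J(1) by (cases "j = j'") auto
  qed
  then show lead: "t j \<in> ?I" using t[of j] j J(1) unfolding chain_index_set_def by auto
  have fin: "finite ?I" unfolding chain_index_set_def by simp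
  have "0 < t j" using t[of j] j J(1) by auto
  then have prev: "prev_elem ?I (t j) \<in> insert 0 ?I" "prev_elem ?I (t j) < t j"
    using prev_elem(1,2)[OF fin] by auto
  show "prev_elem ?I (t j) < t (Suc j)"
  proof (cases "prev_elem ?I (t j) = 0")
    case True
    then show ?thesis using t[of "Suc j"] j J(1) by auto
  next
    case False
    then have "prev_elem ?I (t j) \<in> ?I" using prev(1) by simp
    then have "prev_elem ?I (t j) \<notin> {t (Suc j)..<t j}"
      using j unfolding chain_index_set_def by blast
    then show ?thesis using prev(2) by auto
  qed
qed

lemma vecLambda_chain_index_set:
  assumes fin: "\<forall>i\<in>{1..m}. finite (G i)" and chain: "descending_chain G m L t C"
    and J: "J \<subseteq> {..<L}" "\<forall>j\<in>J. Suc j \<notin> J"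
  shows "m \<in> chain_index_set m t J"
    "(\<Sum>j\<in>J. card (C j)) \<le> vecLambda (reorder m G (sigmaI (chain_index_set m t J)))"
proof -
  let ?I = "chain_index_set m t J"
  have t: "t n \<in> {1..m}" "C n \<in> components (G (t n))" if "n \<le> L" for n
    using chain that unfolding descending_chain_def by auto
  have "1 \<le> m" using t(1)[of 0] by auto
  moreover have "m \<notin> {t (Suc j)..<t j}" if "j \<in> J" for j using t(1)[of j] that J(1) by auto
  ultimately show top: "m \<in> ?I" unfolding chain_index_set_def by auto
  have I: "?I \<subseteq> {1..m}" unfolding chain_index_set_def by blast
  have "card (C j) \<le> lam (ominus (G (t j)) (\<Union> (G ` {1..prev_elem ?I (t j)})))" if j: "j \<in> J" for j
  proof (rule card_le_lam_ominus)
    show "finite (G (t j))" "C j \<in> components (G (t j))" using fin t j J(1) by auto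
    have "j < L" using j J(1) by auto
    then have "\<forall>i\<in>{1..<t (Suc j)}. verts (C j) \<inter> verts (G i) = {}"
      using chain unfolding descending_chain_def by blast
    then show "verts (C j) \<inter> verts (\<Union> (G ` {1..prev_elem ?I (t j)})) = {}"
      using chain_index_set_lead(2)[OF chain J j] unfolding verts_Union by fastforce
  qed
  then have "(\<Sum>j\<in>J. card (C j)) \<le> (\<Sum>j\<in>J. lam (ominus (G (t j)) (\<Union> (G ` {1..prev_elem ?I (t j)}))))"
    by (rule sum_mono)
  also have "\<dots> = (\<Sum>q\<in>t ` J. lam (ominus (G q) (\<Union> (G ` {1..prev_elem ?I q}))))"
  proof -
    have "inj_on t J"
    proof (rule inj_onI)
      fix a b assume ab: "a \<in> J" "b \<in> J" "t a = t b"
      then show "a = b"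
        using descending_chain_less[OF chain, of a b] descending_chain_less[OF chain, of b a] J(1)
        by (cases a b rule: linorder_cases) auto
    qed
    then show ?thesis by (simp add: sum.reindex)
  qed
  also have "\<dots> \<le> vecLambda (reorder m G (sigmaI ?I))"
    using chain_index_set_lead(1)[OF chain J] by (intro vecLambda_ge_sum_lam[OF fin I top]) blast
  finally show "(\<Sum>j\<in>J. card (C j)) \<le> vecLambda (reorder m G (sigmaI ?I))" .
qed

lemma descending_chain_card_bounds:
  assumes fin: "\<forall>i\<in>{1..m}. finite (G i)" and chain: "descending_chain G m L t C" and n: "n \<le> L"
  shows "1 \<le> card (C n)" "card (C n) \<le> Max ((\<lambda>i. lam (G i)) ` {1..m})"
proof -
  have comp: "t n \<in> {1..m}" "finite (G (t n))" "C n \<in> components (G (t n))"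
    using chain fin n unfolding descending_chain_def by auto
  show "1 \<le> card (C n)" using card_component_pos[OF comp(2,3)] .
  have "card (C n) \<le> lam (G (t n))" using card_le_lam[OF comp(2,3)] .
  also have "\<dots> \<le> Max ((\<lambda>i. lam (G i)) ` {1..m})" using comp(1) by (intro Max_ge) auto
  finally show "card (C n) \<le> Max ((\<lambda>i. lam (G i)) ` {1..m})" .
qed

lemma long_descending_chain:
  assumes fin: "\<forall>i\<in>{1..m}. finite (G i)" and k: "1 \<le> k"
    and U: "(\<Union>i\<in>{1..m}. G i) = {1..int k}"
  shows "\<exists>L t C. descending_chain G m L t C \<and>
    gap k (reorder m G id) \<le> (\<Sum>j<L. real (card (C j))) + real (card (C L))"
proof -
  let ?U = "vec_union G m"
  obtain y where y: "y \<in> {0..real k}" "gap k (reorder m G id) - 1/2 < midpoint_dist ?U y"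
    using gap_approx[OF fin vec_union_nonempty[OF fin k U]] by blast
  define e where "e = max 1 \<lceil>y\<rceil>"
  have e: "e \<in> {1..int k}" "y \<in> {real_of_int e - 1..real_of_int e}"
    using y(1) ceiling_correct[of y] le_of_int_ceiling[of y] k unfolding e_def
    by (auto simp: ceiling_le_iff max_def)
  then obtain i where i: "i \<in> {1..m}" "e \<in> G i" using U by blast
  then have "comp (G i) e \<in> components (G i)" unfolding components_def by blast
  then obtain L t C where chain: "C 0 = comp (G i) e" "descending_chain G m L t C"
    using descending_chain_exists[OF i(1)] by metis
  have comp: "finite (G (t n))" "C n \<in> components (G (t n))" if "n \<le> L" for n
    using chain(2) fin that unfolding descending_chain_def by auto
  have "e \<in> C 0" using comp_self[OF i(2)] chain(1) by simp
  then have "y \<in> extent (C 0)" using component_extent(4)[OF comp[of 0]] e(2) by blast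
  then obtain x where x: "x \<in> extent (C L)" "\<bar>x - y\<bar> \<le> (\<Sum>j<L. real (card (C j)))"
    using descending_chain_reach[OF fin chain(2)] by blast
  have "\<bar>midpoint (C L) - x\<bar> \<le> real (card (C L)) / 2"
    using midpoint_extent_dist[OF comp[of L] x(1)] by simp
  moreover have "midpoint_dist ?U y \<le> \<bar>midpoint (C L) - y\<bar>"
    using midpoint_dist_le[OF finite_vec_union[OF fin] descending_chain_last[OF fin chain(2)]] .
  moreover have "1 \<le> card (C L)" using card_component_pos[OF comp[of L]] by simp
  ultimately have "gap k (reorder m G id) \<le> (\<Sum>j<L. real (card (C j))) + real (card (C L))"
    using x(2) y(2) by linarith
  then show ?thesis using chain(2) by blast
qed

lemma index_set_large_gap:
  assumes fin: "\<forall>i\<in>{1..m}. finite (G i)" and k: "1 \<le> k"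
    and U: "(\<Union>i\<in>{1..m}. G i) = {1..int k}"
    and big: "3 * real (Max ((\<lambda>i. lam (G i)) ` {1..m})) < gap k (reorder m G id)"
  shows "\<exists>I. I \<subseteq> {1..m} \<and> m \<in> I \<and>
    2 * (\<Sum>i\<in>{1..m} - I. real (Delta (vec_part G i))) \<le> (\<Sum>i = 1..m. real (Delta (vec_part G i))) \<and>
    (gap k (reorder m G id) - 3 * real (Max ((\<lambda>i. lam (G i)) ` {1..m}))) / 4
      \<le> real (vecLambda (reorder m G (sigmaI I)))"
proof -
  define g where "g = gap k (reorder m G id)"
  define \<Lambda> where "\<Lambda> = real (Max ((\<lambda>i. lam (G i)) ` {1..m}))"
  obtain L t C where chain: "descending_chain G m L t C"
    and long: "g \<le> (\<Sum>j<L. real (card (C j))) + real (card (C L))"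
    using long_descending_chain[OF fin k U] unfolding g_def by blast
  have size: "1 \<le> real (card (C n)) \<and> real (card (C n)) \<le> \<Lambda>" if "n \<le> L" for n
    using descending_chain_card_bounds[OF fin chain that] unfolding \<Lambda>_def by simp
  define p where "p j = (\<Sum>i\<in>{t (Suc j)..<t j}. real (Delta (vec_part G i)))" for j
  have cost: "(\<Sum>i\<in>{1..m} - chain_index_set m t J. real (Delta (vec_part G i))) = sum p J"
    if "J \<subseteq> {..<L}" for J
    unfolding p_def using sum_diff_chain_index_set[OF chain that] .
  have "\<forall>j\<in>{..<L}. 0 < real (card (C j)) \<and> real (card (C j)) \<le> \<Lambda> \<and> 0 \<le> p j"
  proof
    fix j assume "j \<in> {..<L}"
    then show "0 < real (card (C j)) \<and> real (card (C j)) \<le> \<Lambda> \<and> 0 \<le> p j"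
      using size[of j] unfolding p_def by (simp add: sum_nonneg)
  qed
  moreover have "0 < \<Lambda>" using size[of 0] by simp
  moreover have "0 \<le> (g - 3 * \<Lambda>) / 2" using big unfolding g_def \<Lambda>_def by simp
  moreover have "2 * ((g - 3 * \<Lambda>) / 2 + \<Lambda>) \<le> (\<Sum>j<L. real (card (C j)))"
    using long size[OF order_refl] by argo
  ultimately have "\<exists>J\<subseteq>{..<L}. (g - 3 * \<Lambda>) / 2 / 2 \<le> (\<Sum>j\<in>J. real (card (C j))) \<and>
      2 * sum p J \<le> sum p {..<L} \<and> (\<forall>j\<in>J. Suc j \<notin> J)"
    by (rule sparse_light_subset[OF finite_lessThan])
  then obtain J where J: "J \<subseteq> {..<L}" "(g - 3 * \<Lambda>) / 4 \<le> real (\<Sum>j\<in>J. card (C j))"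
      "2 * sum p J \<le> sum p {..<L}" "\<forall>j\<in>J. Suc j \<notin> J"
    by auto
  let ?I = "chain_index_set m t J"
  have "sum p {..<L} \<le> (\<Sum>i = 1..m. real (Delta (vec_part G i)))"
    unfolding cost[OF order_refl, symmetric] by (intro sum_mono2) auto
  then have "2 * (\<Sum>i\<in>{1..m} - ?I. real (Delta (vec_part G i))) \<le> (\<Sum>i = 1..m. real (Delta (vec_part G i)))"
    using cost[OF J(1)] J(3) by linarith
  moreover have "(g - 3 * \<Lambda>) / 4 \<le> real (vecLambda (reorder m G (sigmaI ?I)))"
    using J(2) vecLambda_chain_index_set(2)[OF fin chain J(1,4)] of_nat_le_iff order_trans by blast
  moreover have "?I \<subseteq> {1..m}" "m \<in> ?I"
    using vecLambda_chain_index_set(1)[OF fin chain J(1,4)] unfolding chain_index_set_def by blast+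
  ultimately show ?thesis unfolding g_def \<Lambda>_def by blast
qed

lemma exists_index_set:
  assumes fin: "\<forall>i\<in>{1..m}. finite (G i)" and k: "1 \<le> k"
    and U: "(\<Union>i\<in>{1..m}. G i) = {1..int k}"
  shows "\<exists>I. I \<subseteq> {1..m} \<and> m \<in> I \<and>
    2 * (\<Sum>i\<in>{1..m} - I. real (Delta (vec_part G i))) \<le> (\<Sum>i = 1..m. real (Delta (vec_part G i))) \<and>
    (gap k (reorder m G id) - 3 * real (Max ((\<lambda>i. lam (G i)) ` {1..m}))) / 4
      \<le> real (vecLambda (reorder m G (sigmaI I)))"
proof (cases "3 * real (Max ((\<lambda>i. lam (G i)) ` {1..m})) < gap k (reorder m G id)")
  case True
  then show ?thesis using index_set_large_gap[OF fin k U] by blast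
next
  case False
  have "1 \<le> m" using k U by (cases m) auto
  then show ?thesis using False by (intro exI[of _ "{1..m}"]) (auto simp: sum_nonneg)
qed

theorem lemma5p10:
  fixes k m :: nat and G :: "nat \<Rightarrow> pgraph"
  assumes "k \<ge> 1"
    and "\<forall>i\<in>{1..m}. finite (G i)"
    and "(\<Union>i\<in>{1..m}. G i) = {1..int k}"
  shows "\<exists>I. I \<subseteq> {1..m} \<and> m \<in> I \<and> shift_perm m (sigmaI I) \<and>
     real (vecLambda (reorder m G (sigmaI I)))
        \<ge> (gap k (reorder m G id) - 3 * real (Max ((\<lambda>i. lam (G i)) ` {1..m}))) / 4 \<and>
     (\<forall>j\<in>{1..m}. real (vecDelta (reorder m G (sigmaI (tildeI I j)))) \<ge> real k / (4 * gap k (reorder m G id)))"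
proof -
  obtain I where I: "I \<subseteq> {1..m}" "m \<in> I"
    and cost: "2 * (\<Sum>i\<in>{1..m} - I. real (Delta (vec_part G i))) \<le> (\<Sum>i = 1..m. real (Delta (vec_part G i)))"
    and lam: "(gap k (reorder m G id) - 3 * real (Max ((\<lambda>i. lam (G i)) ` {1..m}))) / 4
      \<le> real (vecLambda (reorder m G (sigmaI I)))"
    using exists_index_set[OF assms(2,1,3)] by blast
  have "vec_union G m \<noteq> {}" using vec_union_nonempty[OF assms(2,1,3)] .
  then have "\<forall>j\<in>{1..m}. real k / (4 * gap k (reorder m G id))
      \<le> real (vecDelta (reorder m G (sigmaI (tildeI I j))))"
    using vecDelta_tildeI_ge[OF assms(2,1) _ I cost] by blast
  then show ?thesis using I lam shift_perm_sigmaI[OF I] by blast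
qed

end
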